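(* Let $\mathfrak S=(S,\xrightarrow{F},\le)$ be an $\infty$-effective complete functional WSTS, $s_0\in S$, and, for a (fair) execution of the procedure $\mathbf{Clover}_{\mathfrak S}$ on input $s_0$, let $A_n$ be the value of the set $A$ after $n$ iterations of the while statement. If $\bigcup_n A_n$ is finite, then the procedure $\mathbf{Clover}_{\mathfrak S}$ terminates on input $s_0$.
   Context: A complete functional WSTS is a functional transition system $(S,\xrightarrow{F},\le)$ ($F$ a finite set of partial maps, $s\to f(s)$ for $s\in\operatorname{dom}f$) such that $(S,\le)$ is a well partial order which is a continuous dcpo, and each $f\in F$ is partial continuous (Scott-open domain, $f(\bigvee D)=\bigvee f(D)$ for directed $D\subseteq\operatorname{dom}f$). $Post(A)$ is the set of one-step successors of elements of $A$. $F^*$: finite compositions of maps in $F$. Lub-acceleration: $\operatorname{dom}g^\infty=\operatorname{dom}g$, $g^\infty(x)=\bigvee_n g^n(x)$ if $x<g(x)$, else $g(x)$. $\infty$-effective: states finitely coded, $\le$ decidable, each $f\in F$ computable with decidable domain, each $g^\infty$ ($g\in F^*$) computable. Procedure $\mathbf{Clover}_{\mathfrak S}(s_0)$: $A\leftarrow\{s_0\}$; while $Post(A)\not\le^\flat A$ do: choose fairly $(g,a)\in F^*\times A$ with $a\in\operatorname{dom}g$ and set $A\leftarrow A\cup\{g^\infty(a)\}$; return $\operatorname{Max}A$. Here $B\le^\flat C$ iff $\downarrow B\subseteq\downarrow C$. Fairness: on every infinite execution, every pair $(g,a)\in F^*\times A_m$ with $a\in\operatorname{dom}g$ is picked at some stage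 $n\ge m$. *)

theory Defs
  imports Main
begin

text \<open>The state space S is the (arbitrary) type 'a, ordered by its partial order.\<close>

definition wpo_type :: "'a::order itself \<Rightarrow> bool" where
  "wpo_type _ \<longleftrightarrow> (\<forall>f :: nat \<Rightarrow> 'a. \<exists>i j. i < j \<and> f i \<le> f j)"

definition directed :: "'a::order set \<Rightarrow> bool" where
  "directed D \<longleftrightarrow> D \<noteq> {} \<and> (\<forall>x\<in>D. \<forall>y\<in>D. \<exists>z\<in>D. x \<le> z \<and> y \<le> z)"

definition is_lub :: "'a::order set \<Rightarrow> 'a \<Rightarrow> bool" where
  "is_lub D s \<longleftrightarrow> (\<forall>d\<in>D. d \<le> s) \<and> (\<forall>u. (\<forall>d\<in>D. d \<le> u) \<longrightarrow> s \<le> u)"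

definition lub :: "'a::order set \<Rightarrow> 'a" where
  "lub D = (THE s. is_lub D s)"

definition dcpo_type :: "'a::order itself \<Rightarrow> bool" where
  "dcpo_type _ \<longleftrightarrow> (\<forall>D :: 'a set. directed D \<longrightarrow> (\<exists>s. is_lub D s))"

definition way_below :: "'a::order \<Rightarrow> 'a \<Rightarrow> bool" where
  "way_below x y \<longleftrightarrow>
     (\<forall>D. directed D \<longrightarrow> (\<forall>s. is_lub D s \<longrightarrow> y \<le> s \<longrightarrow> (\<exists>d\<in>D. x \<le> d)))"

definition continuous_dcpo_type :: "'a::order itself \<Rightarrow> bool" where
  "continuous_dcpo_type T \<longleftrightarrow> dcpo_type T \<and>
     (\<forall>x :: 'a. directed {y. way_below y x} \<and> is_lub {y. way_below y x} x)"

definition scott_open :: "'a::order set \<Rightarrow> bool" where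
  "scott_open U \<longleftrightarrow> (\<forall>x\<in>U. \<forall>y. x \<le> y \<longrightarrow> y \<in> U) \<and>
     (\<forall>D s. directed D \<longrightarrow> is_lub D s \<longrightarrow> s \<in> U \<longrightarrow> D \<inter> U \<noteq> {})"

type_synonym 'a pmap = "'a \<Rightarrow> 'a option"

definition pdom :: "'a pmap \<Rightarrow> 'a set" where
  "pdom f = {x. f x \<noteq> None}"

definition partial_continuous :: "'a::order pmap \<Rightarrow> bool" where
  "partial_continuous f \<longleftrightarrow> scott_open (pdom f) \<and>
     (\<forall>D s. directed D \<longrightarrow> D \<subseteq> pdom f \<longrightarrow> is_lub D s \<longrightarrow>
        (\<exists>t. f s = Some t \<and> is_lub {u. \<exists>d\<in>D. f d = Some u} t))"

definition complete_functional_wsts :: "'a::order pmap set \<Rightarrow> bool" where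
  "complete_functional_wsts F \<longleftrightarrow> finite F \<and> wpo_type TYPE('a) \<and>
     continuous_dcpo_type TYPE('a) \<and> (\<forall>f\<in>F. partial_continuous f)"

fun compose_list :: "'a pmap list \<Rightarrow> 'a pmap" where
  "compose_list [] = Some"
| "compose_list (f # fs) = (\<lambda>x. Option.bind (f x) (compose_list fs))"

definition Fstar :: "'a pmap set \<Rightarrow> 'a pmap set" where
  "Fstar F = {compose_list fs | fs. set fs \<subseteq> F}"

fun piter :: "'a pmap \<Rightarrow> nat \<Rightarrow> 'a pmap" where
  "piter g 0 = Some"
| "piter g (Suc n) = (\<lambda>x. Option.bind (piter g n x) g)"

definition accel :: "'a::order pmap \<Rightarrow> 'a pmap" where
  "accel g x = (case g x of None \<Rightarrow> None
     | Some y \<Rightarrow> if x < y then Some (lub {z. \<exists>n. piter g n x = Some z}) else Some y)"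

definition Post :: "'a pmap set \<Rightarrow> 'a set \<Rightarrow> 'a set" where
  "Post F A = {b. \<exists>f\<in>F. \<exists>a\<in>A. f a = Some b}"

definition downclosure :: "'a::order set \<Rightarrow> 'a set" where
  "downclosure B = {x. \<exists>b\<in>B. x \<le> b}"

definition flat_le :: "'a::order set \<Rightarrow> 'a set \<Rightarrow> bool" where
  "flat_le B C \<longleftrightarrow> downclosure B \<subseteq> downclosure C"

definition clover_guard :: "'a::order pmap set \<Rightarrow> 'a set \<Rightarrow> bool" where
  "clover_guard F A \<longleftrightarrow> \<not> flat_le (Post F A) A"

text \<open>Value of A after n iterations of the while loop, given the sequence of
  choices ch (ch n is the pair (g,a) chosen in iteration n+1). Once the loop
  has exited, A no longer changes.\<close>
primrec clover_A :: "'a::order pmap set \<Rightarrow> 'a \<Rightarrow> (nat \<Rightarrow> 'a pmap \<times> 'a) \<Rightarrow> nat \<Rightarrow> 'a set" where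
  "clover_A F s0 ch 0 = {s0}"
| "clover_A F s0 ch (Suc n) =
     (if clover_guard F (clover_A F s0 ch n)
      then clover_A F s0 ch n \<union> {the (accel (fst (ch n)) (snd (ch n)))}
      else clover_A F s0 ch n)"

definition clover_valid :: "'a::order pmap set \<Rightarrow> 'a \<Rightarrow> (nat \<Rightarrow> 'a pmap \<times> 'a) \<Rightarrow> bool" where
  "clover_valid F s0 ch \<longleftrightarrow> (\<forall>n. clover_guard F (clover_A F s0 ch n) \<longrightarrow>
     fst (ch n) \<in> Fstar F \<and> snd (ch n) \<in> clover_A F s0 ch n \<and> snd (ch n) \<in> pdom (fst (ch n)))"

definition clover_fair :: "'a::order pmap set \<Rightarrow> 'a \<Rightarrow> (nat \<Rightarrow> 'a pmap \<times> 'a) \<Rightarrow> bool" where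
  "clover_fair F s0 ch \<longleftrightarrow> ((\<forall>n. clover_guard F (clover_A F s0 ch n)) \<longrightarrow>
     (\<forall>m g a. g \<in> Fstar F \<longrightarrow> a \<in> clover_A F s0 ch m \<longrightarrow> a \<in> pdom g \<longrightarrow>
        (\<exists>n\<ge>m. ch n = (g, a))))"

definition clover_terminates :: "'a::order pmap set \<Rightarrow> 'a \<Rightarrow> (nat \<Rightarrow> 'a pmap \<times> 'a) \<Rightarrow> bool" where
  "clover_terminates F s0 ch \<longleftrightarrow> (\<exists>n. \<not> clover_guard F (clover_A F s0 ch n))"

end

theory Submission
  imports Defs
begin

text \<open>If the loop never stopped, the guard at stage N would supply a successor
  b = f a with a \<in> A_N lying below no element of A_N. Fairness eventually
  picks (f, a); partial continuous maps are monotone, so the iterates of f from a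
  form an increasing chain and the accelerated value f^\<infinity>(a) dominates b. It is
  therefore a new element outside A_N, so the increasing chain of the A_n never
  stabilises, contradicting finiteness of its union.\<close>

lemma is_lub_unique:
  assumes "is_lub D s" and "is_lub D t"
  shows "s = t"
  using assms unfolding is_lub_def by (meson order_antisym)

lemma is_lub_lub:
  assumes "is_lub D s"
  shows "is_lub D (lub D)"
  unfolding lub_def using assms by (rule theI) (rule is_lub_unique[OF _ assms])

lemma partial_continuous_mono:
  assumes pc: "partial_continuous f" and "x \<le> y" and fx: "f x = Some u"
  obtains v where "f y = Some v" and "u \<le> v"
proof -
  have dir: "directed {x, y}" and lub: "is_lub {x, y} y"
    using \<open>x \<le> y\<close> unfolding directed_def is_lub_def by auto
  have "x \<in> pdom f" using fx by (simp add: pdom_def)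
  then have "y \<in> pdom f"
    using pc \<open>x \<le> y\<close> unfolding partial_continuous_def scott_open_def by blast
  with \<open>x \<in> pdom f\<close> obtain t where "f y = Some t" "is_lub {u. \<exists>d\<in>{x, y}. f d = Some u} t"
    using pc dir lub unfolding partial_continuous_def by blast
  moreover from this have "u \<le> t" using fx unfolding is_lub_def by auto
  ultimately show thesis by (blast intro: that)
qed

lemma piter_increasing_chain:
  assumes pc: "partial_continuous f" and fa: "f a = Some b" and "a \<le> b"
  obtains s where "\<And>n. piter f n a = Some (s n)" and "mono s"
proof -
  have step: "\<exists>u v. piter f k a = Some u \<and> piter f (Suc k) a = Some v \<and> u \<le> v" for k
  proof (induction k)
    case 0
    show ?case using fa \<open>a \<le> b\<close> by simp
  next
    case (Suc k)
    then obtain u v where uv: "piter f k a = Some u" "piter f (Suc k) a = Some v" "u \<le> v"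
      by blast
    then have "f u = Some v" by simp
    with pc \<open>u \<le> v\<close> obtain w where "f v = Some w" "v \<le> w"
      by (rule partial_continuous_mono)
    with uv show ?case by simp
  qed
  define s where "s n = the (piter f n a)" for n
  have ps: "piter f n a = Some (s n)" for n using step[of n] by (auto simp: s_def)
  have "s n \<le> s (Suc n)" for n using step[of n] ps[of n] ps[of "Suc n"] by auto
  then have "mono s" by (simp add: mono_iff_le_Suc)
  with ps show thesis by (rule that)
qed

lemma accel_above_image:
  assumes dcpo: "dcpo_type TYPE('a::order)" and pc: "partial_continuous f"
    and fa: "f (a::'a) = Some b"
  obtains c where "accel f a = Some c" and "b \<le> c"
proof (cases "a < b")
  case False
  then show thesis using fa that by (simp add: accel_def)
next
  case True
  then obtain s where ps: "\<And>n. piter f n a = Some (s n)" and "mono s"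
    using piter_increasing_chain[OF pc fa less_imp_le] by blast
  define Z where "Z = {z. \<exists>n. piter f n a = Some z}"
  have Z: "Z = range s" using ps by (auto simp: Z_def)
  have "directed Z"
    unfolding directed_def Z using \<open>mono s\<close>
    by (auto, metis max.cobounded1 max.cobounded2 monoD)
  then obtain l where "is_lub Z l" using dcpo unfolding dcpo_type_def by blast
  then have "is_lub Z (lub Z)" by (rule is_lub_lub)
  moreover have "b \<in> Z" using fa by (auto simp: Z_def intro: exI[of _ 1])
  ultimately have "b \<le> lub Z" unfolding is_lub_def by blast
  with True fa show thesis by (intro that) (simp_all add: accel_def Z_def)
qed

lemma Fstar_singleton:
  assumes "f \<in> F"
  shows "f \<in> Fstar F"
proof -
  have "compose_list [f] = f"
    by (rule ext) (simp add: Option.bind_eq_Some_conv split: Option.bind_splits)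
  with assms show ?thesis unfolding Fstar_def by (auto intro!: exI[of _ "[f]"])
qed

lemma not_flat_le_witness:
  assumes "\<not> flat_le B C"
  obtains b where "b \<in> B" and "\<And>c. c \<in> C \<Longrightarrow> \<not> b \<le> c"
  using assms unfolding flat_le_def downclosure_def by (auto intro: order_trans)

lemma mono_clover_A: "mono (clover_A F s0 ch)"
  by (auto simp: mono_iff_le_Suc)

lemma finite_Union_mono_stabilises:
  fixes A :: "nat \<Rightarrow> 'b set"
  assumes "mono A" and "finite (\<Union>n. A n)"
  obtains N where "(\<Union>n. A n) \<subseteq> A N"
proof -
  have "A m \<subseteq> A n \<or> A n \<subseteq> A m" for m n
    using nat_le_linear[of m n] monoD[OF \<open>mono A\<close>] by blast
  then have "subset.chain UNIV (range A)"
    unfolding subset.chain_def by blast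
  then obtain B where "B \<in> range A" "(\<Union>n. A n) \<subseteq> B"
    using finite_subset_Union_chain[OF assms(2)] by blast
  with that show thesis by blast
qed

lemma clover_nonterminating_grows:
  assumes dcpo: "dcpo_type TYPE('a::order)" and pc: "\<forall>f\<in>F. partial_continuous f"
    and fair: "clover_fair F s0 ch" and nonterm: "\<not> clover_terminates F (s0::'a) ch"
  shows "\<exists>n. \<not> clover_A F s0 ch n \<subseteq> clover_A F s0 ch N"
proof -
  let ?A = "clover_A F s0 ch"
  have guard: "clover_guard F (?A n)" for n
    using nonterm unfolding clover_terminates_def by auto
  then have "\<not> flat_le (Post F (?A N)) (?A N)" unfolding clover_guard_def by blast
  then obtain b where b: "b \<in> Post F (?A N)" "\<And>c. c \<in> ?A N \<Longrightarrow> \<not> b \<le> c"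
    by (rule not_flat_le_witness) blast
  then obtain f a where f: "f \<in> F" and a: "a \<in> ?A N" and fa: "f a = Some b"
    unfolding Post_def by auto
  have "a \<in> pdom f" using fa by (simp add: pdom_def)
  then obtain n where n: "ch n = (f, a)"
    using fair[unfolded clover_fair_def, rule_format, OF guard Fstar_singleton[OF f] a]
    by blast
  obtain c where c: "accel f a = Some c" "b \<le> c"
    using accel_above_image[OF dcpo bspec[OF pc f] fa] .
  have "c \<in> ?A (Suc n)" using guard n c by simp
  moreover have "c \<notin> ?A N" using b(2) c(2) by blast
  ultimately show ?thesis by blast
qed

theorem proposition5p4:
  fixes F :: "('a::order) pmap set" and s0 :: 'a and ch :: "nat \<Rightarrow> 'a pmap \<times> 'a"
  assumes "complete_functional_wsts F"
    and "clover_valid F s0 ch"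
    and "clover_fair F s0 ch"
    and "finite (\<Union>n. clover_A F s0 ch n)"
  shows "clover_terminates F s0 ch"
proof (rule ccontr)
  assume nonterm: "\<not> clover_terminates F s0 ch"
  obtain N where N: "(\<Union>n. clover_A F s0 ch n) \<subseteq> clover_A F s0 ch N"
    using finite_Union_mono_stabilises[OF mono_clover_A assms(4)] .
  have "dcpo_type TYPE('a)" and "\<forall>f\<in>F. partial_continuous f"
    using assms(1) unfolding complete_functional_wsts_def continuous_dcpo_type_def by auto
  from clover_nonterminating_grows[OF this assms(3) nonterm] N show False by blast
qed

end
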